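(* For positive integers $n,r,k$ with $n\ge 2(k+r)$, $$\gamma_k(K(n,r))\ \ge\ \gamma_k(K(n+1,r)).$$
   Context: For integers $n\ge 2r$, the Kneser graph $K(n,r)$ has as vertices the $r$-element subsets of $[n]=\{1,\dots,n\}$, two vertices being adjacent iff they are disjoint. For a graph $G$ and positive integer $k$, a set $D\subseteq V(G)$ is $k$-dominating if every vertex $u\in V(G)\setminus D$ has at least $k$ neighbors in $D$; $\gamma_k(G)$ is the minimum cardinality of a $k$-dominating set. *)

theory Defs
  imports Main
begin

definition kneser_vertices :: "nat \<Rightarrow> nat \<Rightarrow> nat set set" where
  "kneser_vertices n r = {A. A \<subseteq> {1..n} \<and> card A = r}"

definition kneser_adj :: "nat set \<Rightarrow> nat set \<Rightarrow> bool" where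
  "kneser_adj A B \<longleftrightarrow> A \<inter> B = {}"

definition k_dominating :: "'a set \<Rightarrow> ('a \<Rightarrow> 'a \<Rightarrow> bool) \<Rightarrow> nat \<Rightarrow> 'a set \<Rightarrow> bool" where
  "k_dominating V adj k D \<longleftrightarrow> D \<subseteq> V \<and>
     (\<forall>u \<in> V - D. card {v \<in> D. adj u v} \<ge> k)"

definition k_domination_number :: "'a set \<Rightarrow> ('a \<Rightarrow> 'a \<Rightarrow> bool) \<Rightarrow> nat \<Rightarrow> nat" where
  "k_domination_number V adj k = (LEAST m. \<exists>D. k_dominating V adj k D \<and> card D = m)"

abbreviation gamma_kneser :: "nat \<Rightarrow> nat \<Rightarrow> nat \<Rightarrow> nat" where
  "gamma_kneser k n r \<equiv> k_domination_number (kneser_vertices n r) kneser_adj k"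

end

theory Submission
  imports Defs
begin

text \<open>
  Let \<open>D\<close> be a minimum \<open>k\<close>-dominating set of \<open>K(n,r)\<close>; we show that \<open>D\<close> is also
  \<open>k\<close>-dominating in \<open>K(n+1,r)\<close>. Only vertices \<open>u = A \<union> {n+1}\<close> are new. If some
  \<open>A \<union> {x}\<close> with \<open>x \<in> [n] - A\<close> lies outside \<open>D\<close>, its \<open>k\<close> neighbours in \<open>D\<close> avoid
  \<open>n+1\<close> and are therefore neighbours of \<open>u\<close> as well. Otherwise \<open>D\<close> contains the whole
  star \<open>{A \<union> {x} | x \<in> [n] - A}\<close>, and since \<open>n \<ge> 2(k+r)\<close> we may trade \<open>k+1\<close> members
  of the star for \<open>k\<close> vertices disjoint from them, contradicting minimality.
\<close>

lemma k_dominating_self: "k_dominating V adj k V"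
  unfolding k_dominating_def by simp

lemma k_domination_number_le:
  "k_dominating V adj k D \<Longrightarrow> k_domination_number V adj k \<le> card D"
  unfolding k_domination_number_def by (rule Least_le) blast

lemma k_domination_number_attained:
  obtains D where "k_dominating V adj k D" "card D = k_domination_number V adj k"
proof -
  have "\<exists>m D. k_dominating V adj k D \<and> card D = m"
    using k_dominating_self by blast
  then have "\<exists>D. k_dominating V adj k D \<and> card D = k_domination_number V adj k"
    unfolding k_domination_number_def by (rule LeastI_ex)
  then show ?thesis using that by blast
qed

lemma inj_on_insert_outside: "inj_on (\<lambda>x. insert x A) (- A)"
  by (rule inj_onI) (metis ComplD insertE insertI1)

lemma exists_family_of_subsets_with_card:
  assumes "finite S" "0 < r" "r - 1 + k \<le> card S"
  shows "\<exists>T. card T = k \<and> (\<forall>t\<in>T. t \<subseteq> S \<and> card t = r)"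
proof -
  obtain Y where Y: "Y \<subseteq> S" "card Y = r - 1"
    using assms(3) by (meson le_add1 order.trans obtain_subset_with_card_n)
  have "k \<le> card (S - Y)"
    using Y assms by (simp add: card_Diff_subset finite_subset)
  then obtain Z where Z: "Z \<subseteq> S - Y" "card Z = k"
    by (meson obtain_subset_with_card_n)
  have "inj_on (\<lambda>z. insert z Y) Z"
    using inj_on_insert_outside by (rule inj_on_subset) (use Z in auto)
  then have "card ((\<lambda>z. insert z Y) ` Z) = k"
    using Z by (simp add: card_image)
  moreover have "insert z Y \<subseteq> S \<and> card (insert z Y) = r" if "z \<in> Z" for z
    using that Y Z assms(1,2) by (auto simp: finite_subset)
  ultimately show ?thesis by blast
qed

lemma finite_kneser_vertices: "finite (kneser_vertices n r)"
  by (rule finite_subset[of _ "Pow {1..n}"]) (auto simp: kneser_vertices_def)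

lemma kneser_vertices_mono: "n \<le> m \<Longrightarrow> kneser_vertices n r \<subseteq> kneser_vertices m r"
  unfolding kneser_vertices_def by auto

lemma insert_in_kneser_vertices:
  assumes "A \<subseteq> {1..n}" "card A = r - 1" "0 < r" "x \<in> {1..n} - A"
  shows "insert x A \<in> kneser_vertices n r"
  using assms finite_subset[OF assms(1)] by (auto simp: kneser_vertices_def)

definition kneser_star :: "nat \<Rightarrow> nat set \<Rightarrow> nat set set" where
  "kneser_star n A = (\<lambda>x. insert x A) ` ({1..n} - A)"

lemma card_kneser_star_neighbours_ge:
  assumes "finite u" "u \<inter> A = {}"
  shows "card ({1..n} - A - X) - card u
    \<le> card {v \<in> kneser_star n A - (\<lambda>x. insert x A) ` X. kneser_adj u v}"
proof -
  define S where "S = {1..n} - A - X - u"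
  have inj: "inj_on (\<lambda>x. insert x A) ({1..n} - A)"
    using inj_on_insert_outside by (rule inj_on_subset) auto
  have "card ({1..n} - A - X) - card u \<le> card S"
    unfolding S_def using assms(1) by (rule diff_card_le_card_Diff)
  also have "\<dots> = card ((\<lambda>x. insert x A) ` S)"
    by (rule card_image[symmetric], rule inj_on_subset[OF inj]) (auto simp: S_def)
  also have "\<dots> \<le> card {v \<in> kneser_star n A - (\<lambda>x. insert x A) ` X. kneser_adj u v}"
  proof (rule card_mono)
    show "finite {v \<in> kneser_star n A - (\<lambda>x. insert x A) ` X. kneser_adj u v}"
      by (simp add: kneser_star_def)
    have "insert x A \<in> {v \<in> kneser_star n A - (\<lambda>x. insert x A) ` X. kneser_adj u v}"
      if x: "x \<in> S" for x
    proof -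
      have "insert x A \<notin> (\<lambda>x. insert x A) ` X"
      proof
        assume "insert x A \<in> (\<lambda>x. insert x A) ` X"
        then obtain y where y: "y \<in> X" "insert x A = insert y A" by blast
        then have "x \<in> insert y A" by blast
        then show False
          using x y(1) by (auto simp: S_def)
      qed
      moreover have "insert x A \<in> kneser_star n A" "kneser_adj u (insert x A)"
        using x assms(2) by (auto simp: S_def kneser_star_def kneser_adj_def)
      ultimately show ?thesis by blast
    qed
    then show "(\<lambda>x. insert x A) ` S \<subseteq> {v \<in> kneser_star n A - (\<lambda>x. insert x A) ` X. kneser_adj u v}"
      by blast
  qed
  finally show ?thesis .
qed

lemma k_dominating_kneser_star_exchange:
  assumes D: "k_dominating (kneser_vertices n r) kneser_adj k D"
    and star: "kneser_star n A \<subseteq> D"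
    and free: "k + r \<le> card ({1..n} - A - X)"
    and T: "T \<subseteq> kneser_vertices n r" "k \<le> card T" "\<forall>t\<in>T. t \<inter> (A \<union> X) = {}"
  shows "k_dominating (kneser_vertices n r) kneser_adj k (D - (\<lambda>x. insert x A) ` X \<union> T)"
    (is "k_dominating ?V _ _ ?D1")
  unfolding k_dominating_def
proof (intro conjI ballI)
  show "?D1 \<subseteq> ?V"
    using D T(1) by (auto simp: k_dominating_def)
  fix u assume u: "u \<in> ?V - ?D1"
  have "finite ?D1"
    using D T(1) finite_kneser_vertices by (auto simp: k_dominating_def finite_subset)
  then have "finite {v \<in> ?D1. kneser_adj u v}"
    by (rule rev_finite_subset) auto
  then have enough: "k \<le> card {v \<in> ?D1. kneser_adj u v}"
    if "S \<subseteq> {v \<in> ?D1. kneser_adj u v}" "k \<le> card S" for S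
    using that by (meson card_mono order.trans)
  consider (traded) "u \<in> (\<lambda>x. insert x A) ` X"
    | (meets) "u \<notin> D" "u \<inter> A \<noteq> {}"
    | (avoids) "u \<notin> D" "u \<inter> A = {}"
    using u by blast
  then show "k \<le> card {v \<in> ?D1. kneser_adj u v}"
  proof cases
    case traded
    then have "T \<subseteq> {v \<in> ?D1. kneser_adj u v}"
      using T(3) by (auto simp: kneser_adj_def)
    then show ?thesis using enough T(2) by blast
  next
    case meets
    text \<open>A neighbour of \<open>u\<close> cannot contain \<open>A\<close>, so it was not traded away.\<close>
    then have "{v \<in> D. kneser_adj u v} \<subseteq> {v \<in> ?D1. kneser_adj u v}"
      by (auto simp: kneser_adj_def)
    moreover have "k \<le> card {v \<in> D. kneser_adj u v}"
      using D u meets by (auto simp: k_dominating_def)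
    ultimately show ?thesis using enough by blast
  next
    case avoids
    have "card u = r" "finite u"
      using u by (auto simp: kneser_vertices_def finite_subset)
    then have "k \<le> card {v \<in> kneser_star n A - (\<lambda>x. insert x A) ` X. kneser_adj u v}"
      using card_kneser_star_neighbours_ge[of u A n X] avoids free by simp
    moreover have "{v \<in> kneser_star n A - (\<lambda>x. insert x A) ` X. kneser_adj u v}
        \<subseteq> {v \<in> ?D1. kneser_adj u v}"
      using star by blast
    ultimately show ?thesis using enough by blast
  qed
qed

lemma k_domination_number_less_if_kneser_star_subset:
  assumes D: "k_dominating (kneser_vertices n r) kneser_adj k D"
    and "0 < r" and "2 * (k + r) \<le> n"
    and A: "A \<subseteq> {1..n}" "card A = r - 1" and star: "kneser_star n A \<subseteq> D"
  shows "k_domination_number (kneser_vertices n r) kneser_adj k < card D"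
proof -
  define W where "W = {1..n} - A"
  have "finite A" using A(1) finite_subset by blast
  then have card_W: "card W = n - (r - 1)"
    using A by (simp add: W_def card_Diff_subset)
  then have "k + 1 \<le> card W"
    using assms(2,3) by arith
  then obtain X where X: "X \<subseteq> W" "card X = k + 1"
    by (meson obtain_subset_with_card_n)
  have card_free: "card (W - X) = n - (r - 1) - (k + 1)"
    using X card_W by (simp add: W_def card_Diff_subset finite_subset)
  then have "r - 1 + k \<le> card (W - X)"
    using assms(2,3) by arith
  then obtain T where T: "card T = k" "\<forall>t\<in>T. t \<subseteq> W - X \<and> card t = r"
    using exists_family_of_subsets_with_card[of "W - X" r k] \<open>0 < r\<close> by (auto simp: W_def)
  define R where "R = (\<lambda>x. insert x A) ` X"
  have "k_dominating (kneser_vertices n r) kneser_adj k (D - R \<union> T)"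
    unfolding R_def
  proof (rule k_dominating_kneser_star_exchange[OF D star])
    show "k + r \<le> card ({1..n} - A - X)"
      using X card_free assms(2,3) by (auto simp: W_def)
    show "T \<subseteq> kneser_vertices n r" "k \<le> card T" "\<forall>t\<in>T. t \<inter> (A \<union> X) = {}"
      using T by (auto simp: kneser_vertices_def W_def)
  qed
  then have "k_domination_number (kneser_vertices n r) kneser_adj k \<le> card (D - R \<union> T)"
    by (rule k_domination_number_le)
  also have "\<dots> \<le> card (D - R) + card T"
    by (rule card_Un_le)
  also have "\<dots> < card D"
  proof -
    have "inj_on (\<lambda>x. insert x A) X"
      using inj_on_insert_outside by (rule inj_on_subset) (use X in \<open>auto simp: W_def\<close>)
    then have "card R = k + 1"
      using X(2) by (simp add: R_def card_image)
    moreover have "R \<subseteq> D" "finite D"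
      using X star D finite_kneser_vertices
      by (auto simp: R_def W_def kneser_star_def k_dominating_def finite_subset)
    ultimately show ?thesis
      using T(1) card_mono[of D R] by (simp add: card_Diff_subset finite_subset)
  qed
  finally show ?thesis .
qed

lemma k_dominating_kneser_Suc:
  assumes D: "k_dominating (kneser_vertices n r) kneser_adj k D"
    and no_star: "\<forall>A. A \<subseteq> {1..n} \<and> card A = r - 1 \<longrightarrow> \<not> kneser_star n A \<subseteq> D"
  shows "k_dominating (kneser_vertices (n + 1) r) kneser_adj k D"
  unfolding k_dominating_def
proof (intro conjI ballI)
  have DV: "D \<subseteq> kneser_vertices n r"
    using D by (simp add: k_dominating_def)
  then show "D \<subseteq> kneser_vertices (n + 1) r"
    using kneser_vertices_mono[of n "n + 1" r] by simp
  fix u assume u: "u \<in> kneser_vertices (n + 1) r - D"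
  show "k \<le> card {v \<in> D. kneser_adj u v}"
  proof (cases "n + 1 \<in> u")
    case False
    then have "u \<in> kneser_vertices n r - D"
      using u by (auto simp: kneser_vertices_def subset_iff le_Suc_eq)
    then show ?thesis using D by (simp add: k_dominating_def)
  next
    case True
    define A where "A = u - {n + 1}"
    have u_eq: "u = insert (n + 1) A" and A: "A \<subseteq> {1..n}" "card A = r - 1" and "0 < r"
      using u True by (auto simp: A_def kneser_vertices_def finite_subset card_gt_0_iff)
    then have "\<not> kneser_star n A \<subseteq> D"
      using no_star by blast
    then obtain x where x: "x \<in> {1..n} - A" "insert x A \<notin> D"
      unfolding kneser_star_def by blast
    then have "insert x A \<in> kneser_vertices n r - D"
      using insert_in_kneser_vertices[OF A \<open>0 < r\<close>] by simp
    then have "k \<le> card {v \<in> D. kneser_adj (insert x A) v}"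
      using D by (simp add: k_dominating_def)
    also have "\<dots> \<le> card {v \<in> D. kneser_adj u v}"
    proof (rule card_mono)
      show "finite {v \<in> D. kneser_adj u v}"
        using DV finite_kneser_vertices by (auto intro: finite_subset)
      text \<open>Members of \<open>D\<close> avoid the new point \<open>n + 1\<close>.\<close>
      show "{v \<in> D. kneser_adj (insert x A) v} \<subseteq> {v \<in> D. kneser_adj u v}"
        using DV u_eq by (fastforce simp: kneser_adj_def kneser_vertices_def)
    qed
    finally show ?thesis .
  qed
qed

theorem theorem2p3:
  fixes n r k :: nat
  assumes "n > 0" and "r > 0" and "k > 0" and "n \<ge> 2 * (k + r)"
  shows "gamma_kneser k n r \<ge> gamma_kneser k (n + 1) r"
proof -
  obtain D where D: "k_dominating (kneser_vertices n r) kneser_adj k D"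
    and min: "card D = gamma_kneser k n r"
    by (rule k_domination_number_attained)
  have "\<forall>A. A \<subseteq> {1..n} \<and> card A = r - 1 \<longrightarrow> \<not> kneser_star n A \<subseteq> D"
    using k_domination_number_less_if_kneser_star_subset[OF D \<open>r > 0\<close> \<open>n \<ge> 2 * (k + r)\<close>] min
    by auto
  then have "k_dominating (kneser_vertices (n + 1) r) kneser_adj k D"
    by (rule k_dominating_kneser_Suc[OF D])
  then show ?thesis
    using min k_domination_number_le by metis
qed

end
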